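(* Let $g$ be an $n$-person WTT game form, let $i\in[n]$, and let $j\neq k$ be elements of $X_i$. Then $H_j^{\neq}(k)$ is a constant region or $H_k^{\neq}(j)$ is a constant region (or both are).
   Context: Let $X_1,\dots,X_n$ and $A$ be finite nonempty sets. An $n$-person game form is a map $g: X_1\times\cdots\times X_n\to A$; elements of $X=X_1\times\cdots\times X_n$ are strategy profiles, elements of $A$ are outcomes. For a direction $i\in[n]$ write $X_{-i}=\prod_{t\neq i}X_t$, and for $s\in X_i$, $y\in X_{-i}$ write $(s,y)$ for the profile with $i$-th coordinate $s$ and other coordinates $y$. The hyperplane perpendicular to direction $i$ at $s\in X_i$ is $H_s=\{x\in X: x_i=s\}$. The game form $g$ is weakly totally tight (WTT) if for every $i\in[n]$, all $s\neq s'$ in $X_i$ and all $y\neq y'$ in $X_{-i}$, at least one of $g(s,y)=g(s,y')$, $g(s,y)=g(s',y)$, $g(s',y')=g(s',y)$, $g(s',y')=g(s,y')$ holds. A set $S\subseteq X$ is a constant region if there is $c\in A$ with $g(x)=c$ for all $x\in S$. For a direction $i$ and distinct $j,k\in X_i$, set $H_j^{\neq}(k)=\{(j,y): y\in X_{-i},\ g(j,y)\neq g(k,y)\}$ and $H_j^{=}(k)=H_j\setminus H_j^{\neq}(k)$. *)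

theory Defs
  imports "HOL-Library.FuncSet"
begin

text \<open>Players are 1..n; strategy sets X i; a profile is an element of
  PiE {1..n} X. An element y of X_{-i} is an element of PiE ({1..n} - {i}) X,
  and the profile (s,y) is y(i := s).\<close>

definition profiles :: "nat \<Rightarrow> (nat \<Rightarrow> 's set) \<Rightarrow> (nat \<Rightarrow> 's) set" where
  "profiles n X = PiE {1..n} X"

definition others :: "nat \<Rightarrow> (nat \<Rightarrow> 's set) \<Rightarrow> nat \<Rightarrow> (nat \<Rightarrow> 's) set" where
  "others n X i = PiE ({1..n} - {i}) X"

definition game_form :: "nat \<Rightarrow> (nat \<Rightarrow> 's set) \<Rightarrow> 'a set \<Rightarrow> ((nat \<Rightarrow> 's) \<Rightarrow> 'a) \<Rightarrow> bool" where
  "game_form n X A g \<longleftrightarrow>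
     (\<forall>i\<in>{1..n}. finite (X i) \<and> X i \<noteq> {}) \<and> finite A \<and> A \<noteq> {} \<and>
     (\<forall>x\<in>profiles n X. g x \<in> A)"

definition WTT :: "nat \<Rightarrow> (nat \<Rightarrow> 's set) \<Rightarrow> ((nat \<Rightarrow> 's) \<Rightarrow> 'a) \<Rightarrow> bool" where
  "WTT n X g \<longleftrightarrow>
    (\<forall>i\<in>{1..n}. \<forall>s\<in>X i. \<forall>s'\<in>X i. \<forall>y\<in>others n X i. \<forall>y'\<in>others n X i.
       s \<noteq> s' \<longrightarrow> y \<noteq> y' \<longrightarrow>
       g (y(i := s)) = g (y'(i := s)) \<or> g (y(i := s)) = g (y(i := s')) \<or>
       g (y'(i := s')) = g (y(i := s')) \<or> g (y'(i := s')) = g (y'(i := s)))"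

definition constant_region :: "'a set \<Rightarrow> ((nat \<Rightarrow> 's) \<Rightarrow> 'a) \<Rightarrow> (nat \<Rightarrow> 's) set \<Rightarrow> bool" where
  "constant_region A g S \<longleftrightarrow> (\<exists>c\<in>A. \<forall>x\<in>S. g x = c)"

definition H_neq :: "nat \<Rightarrow> (nat \<Rightarrow> 's set) \<Rightarrow> ((nat \<Rightarrow> 's) \<Rightarrow> 'a) \<Rightarrow> nat \<Rightarrow> 's \<Rightarrow> 's \<Rightarrow> (nat \<Rightarrow> 's) set" where
  "H_neq n X g i j k = {y(i := j) | y. y \<in> others n X i \<and> g (y(i := j)) \<noteq> g (y(i := k))}"

end

theory Submission
  imports Defs
begin

text \<open>Write \<open>a y = g (y(i := j))\<close> and \<open>b y = g (y(i := k))\<close> and let \<open>D\<close> be the set of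
  \<open>y \<in> X\<^sub>-\<^sub>i\<close> with \<open>a y \<noteq> b y\<close>, so that \<open>H\<^sub>j\<^sup>\<noteq>(k)\<close> and \<open>H\<^sub>k\<^sup>\<noteq>(j)\<close> carry the values of
  \<open>a\<close> and \<open>b\<close> on \<open>D\<close>. For \<open>y, y' \<in> D\<close> two of the four WTT alternatives are excluded, so
  \<open>a y = a y'\<close> or \<open>b y = b y'\<close>. Two functions such that any two points agree in one of
  them cannot both be non-constant: if \<open>a y \<noteq> a y'\<close> then \<open>b y = b y'\<close>, and a point
  \<open>w\<close> with \<open>b w \<noteq> b y\<close> would force \<open>a y = a w = a y'\<close>.\<close>

lemma pairwise_agree_imp_constant:
  assumes "\<And>x y. x \<in> D \<Longrightarrow> y \<in> D \<Longrightarrow> f x = f y \<or> h x = h y"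
  shows "(\<forall>x\<in>D. \<forall>y\<in>D. f x = f y) \<or> (\<forall>x\<in>D. \<forall>y\<in>D. h x = h y)"
proof (rule ccontr)
  assume "\<not> ?thesis"
  then obtain y y' w w' where
    y: "y \<in> D" "y' \<in> D" "f y \<noteq> f y'" and w: "w \<in> D" "w' \<in> D" "h w \<noteq> h w'"
    by blast
  have "h y = h y'" using assms y by blast
  obtain v where v: "v \<in> D" "h v \<noteq> h y"
    using w \<open>h y = h y'\<close> by metis
  have "f v = f y" using assms[OF v(1) y(1)] v(2) by metis
  moreover have "f v = f y'" using assms[OF v(1) y(2)] v(2) \<open>h y = h y'\<close> by metis
  ultimately show False using y(3) by simp
qed

lemma upd_others_in_profiles:
  assumes "y \<in> others n X i" "i \<in> {1..n}" "s \<in> X i"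
  shows "y(i := s) \<in> profiles n X"
  using assms unfolding profiles_def others_def by (auto simp: PiE_def Pi_def extensional_def)

lemma WTT_disagreement_rows_agree:
  assumes "WTT n X g" "i \<in> {1..n}" "j \<in> X i" "k \<in> X i" "j \<noteq> k"
    and "y \<in> others n X i" "y' \<in> others n X i"
    and "g (y(i := j)) \<noteq> g (y(i := k))" "g (y'(i := j)) \<noteq> g (y'(i := k))"
  shows "g (y(i := j)) = g (y'(i := j)) \<or> g (y(i := k)) = g (y'(i := k))"
proof (cases "y = y'")
  case False
  with assms show ?thesis unfolding WTT_def by metis
qed simp

lemma constant_region_H_neqI:
  assumes "game_form n X A g" "i \<in> {1..n}" "j \<in> X i"
    and const: "\<And>y y'. y \<in> others n X i \<Longrightarrow> y' \<in> others n X i \<Longrightarrow>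
      g (y(i := j)) \<noteq> g (y(i := k)) \<Longrightarrow> g (y'(i := j)) \<noteq> g (y'(i := k)) \<Longrightarrow>
      g (y(i := j)) = g (y'(i := j))"
  shows "constant_region A g (H_neq n X g i j k)"
proof (cases "H_neq n X g i j k = {}")
  case True
  then show ?thesis
    using assms(1) unfolding game_form_def constant_region_def by blast
next
  case False
  then obtain y where y: "y \<in> others n X i" "g (y(i := j)) \<noteq> g (y(i := k))"
    unfolding H_neq_def by blast
  have "g (y(i := j)) \<in> A"
    using assms(1) upd_others_in_profiles[OF y(1) assms(2,3)] unfolding game_form_def by blast
  moreover have "\<forall>x\<in>H_neq n X g i j k. g x = g (y(i := j))"
    using const[OF _ y(1) _ y(2)] unfolding H_neq_def by blast
  ultimately show ?thesis unfolding constant_region_def by blast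
qed

theorem mainTheorem2:
  fixes n :: nat and X :: "nat \<Rightarrow> 's set" and A :: "'a set" and g :: "(nat \<Rightarrow> 's) \<Rightarrow> 'a"
  assumes "game_form n X A g"
    and "WTT n X g"
    and "i \<in> {1..n}"
    and "j \<in> X i" and "k \<in> X i" and "j \<noteq> k"
  shows "constant_region A g (H_neq n X g i j k) \<or> constant_region A g (H_neq n X g i k j)"
proof -
  define D where "D = {y \<in> others n X i. g (y(i := j)) \<noteq> g (y(i := k))}"
  have "(\<forall>y\<in>D. \<forall>y'\<in>D. g (y(i := j)) = g (y'(i := j))) \<or>
        (\<forall>y\<in>D. \<forall>y'\<in>D. g (y(i := k)) = g (y'(i := k)))"
    by (rule pairwise_agree_imp_constant)
      (use WTT_disagreement_rows_agree[OF assms(2-6)] in \<open>auto simp: D_def\<close>)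
  then show ?thesis
  proof
    assume "\<forall>y\<in>D. \<forall>y'\<in>D. g (y(i := j)) = g (y'(i := j))"
    then show ?thesis
      using constant_region_H_neqI[OF assms(1,3,4)] unfolding D_def by blast
  next
    assume "\<forall>y\<in>D. \<forall>y'\<in>D. g (y(i := k)) = g (y'(i := k))"
    then show ?thesis
      using constant_region_H_neqI[OF assms(1,3,5)] unfolding D_def by (blast dest: sym)
  qed
qed

end
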